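(* Let $F:(0,\infty)\to(0,\infty)$ be strictly decreasing and let $(x_n)_{n\in\mathbb Z}$ be an equilibrium configuration for $F$. Suppose that some gap is maximal, i.e. there is $k\in\mathbb Z$ with $x_{k+1}-x_k\ge x_{m+1}-x_m$ for all $m\in\mathbb Z$, or that some gap is minimal, i.e. there is $k$ with $x_{k+1}-x_k\le x_{m+1}-x_m$ for all $m\in\mathbb Z$. Then the configuration is trivial, i.e. $x_{n+1}-x_n$ is independent of $n$.
   Context: A force law is a strictly decreasing function $F:(0,\infty)\to(0,\infty)$; two particles at distance $d$ repel each other with force of magnitude $F(d)$. A configuration is a strictly increasing bi-infinite sequence $(x_n)_{n\in\mathbb Z}$ of reals (particle positions). The particle at $x_n$ is in equilibrium if the force from the left $\sum_{m<n}F(x_n-x_m)$ and the force from the right $\sum_{m>n}F(x_m-x_n)$ are both finite and equal. An equilibrium configuration is a configuration in which every particle is in equilibrium. It is trivial if it is an arithmetic progression, i.e. $x_{n+1}-x_n$ is constant. The numbers $x_{n+1}-x_n$ are called gaps. *)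

theory Defs
  imports "HOL-Analysis.Analysis"
begin

definition force_law :: "(real \<Rightarrow> real) \<Rightarrow> bool" where
  "force_law F \<longleftrightarrow> (\<forall>d>0. F d > 0) \<and> strict_antimono_on {0<..} F"

definition configuration :: "(int \<Rightarrow> real) \<Rightarrow> bool" where
  "configuration x \<longleftrightarrow> strict_mono x"

definition in_equilibrium :: "(real \<Rightarrow> real) \<Rightarrow> (int \<Rightarrow> real) \<Rightarrow> int \<Rightarrow> bool" where
  "in_equilibrium F x n \<longleftrightarrow>
     (\<lambda>m. F (x n - x m)) summable_on {..<n} \<and>
     (\<lambda>m. F (x m - x n)) summable_on {n<..} \<and>
     (\<Sum>\<^sub>\<infinity>m\<in>{..<n}. F (x n - x m)) = (\<Sum>\<^sub>\<infinity>m\<in>{n<..}. F (x m - x n))"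

definition equilibrium_configuration :: "(real \<Rightarrow> real) \<Rightarrow> (int \<Rightarrow> real) \<Rightarrow> bool" where
  "equilibrium_configuration F x \<longleftrightarrow> configuration x \<and> (\<forall>n. in_equilibrium F x n)"

definition trivial_configuration :: "(int \<Rightarrow> real) \<Rightarrow> bool" where
  "trivial_configuration x \<longleftrightarrow> (\<exists>c. \<forall>n. x (n + 1) - x n = c)"

end

theory Submission
  imports Defs
begin

text \<open>Shifting the configuration by one index turns the gap sequence \<open>x (m + 1) - x m\<close> into the
  difference of two configurations that are both in equilibrium at \<open>k\<close>. If such a difference
  \<open>y - x\<close> is maximal at \<open>k\<close>, then every particle of \<open>y\<close> is at least as far from \<open>y k\<close> on the
  left, and at most as far on the right, as the corresponding particle of \<open>x\<close> from \<open>x k\<close>. So the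
  left force on \<open>y k\<close> is at most that on \<open>x k\<close>, and the right force at least; equilibrium of both
  forces equality term by term, and strict monotonicity of \<open>F\<close> makes \<open>y - x\<close> constant.
  A minimal gap is handled by exchanging \<open>x\<close> and \<open>y\<close>.\<close>

lemma infsum_mono_eq_imp_eq:
  fixes f g :: "'a \<Rightarrow> real"
  assumes "f summable_on A" "g summable_on A" "\<And>a. a \<in> A \<Longrightarrow> f a \<le> g a"
    and "infsum g A \<le> infsum f A" "a \<in> A"
  shows "f a = g a"
proof (rule ccontr)
  assume "f a \<noteq> g a"
  with assms have "f a < g a" by force
  then have "infsum f A < infsum g A"
    using assms by (intro has_sum_strict_mono[OF has_sum_infsum has_sum_infsum]) auto
  with assms(4) show False by simp
qed

lemma force_law_antimono:
  assumes "force_law F" "0 < a" "a \<le> b"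
  shows "F b \<le> F a"
  using assms strict_antimono_iff_antimono[of "{0<..}" F]
  unfolding force_law_def monotone_on_def by auto

lemma force_law_inj:
  assumes "force_law F" "0 < a" "0 < b" "F a = F b"
  shows "a = b"
  using assms strict_antimono_iff_antimono[of "{0<..}" F]
  unfolding force_law_def inj_on_def by auto

lemma in_equilibrium_shift:
  "in_equilibrium F (\<lambda>m. x (m + j)) k \<longleftrightarrow> in_equilibrium F x (k + j)"
proof -
  have left: "bij_betw (\<lambda>m. m + j) {..<k} {..<k + j}"
    and right: "bij_betw (\<lambda>m. m + j) {k<..} {k + j<..}"
    by (auto intro!: bij_betwI[where g = "\<lambda>m. m - j"])
  show ?thesis
    unfolding in_equilibrium_def
    using summable_on_reindex_bij_betw[OF left, of "\<lambda>m. F (x (k + j) - x m)"]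
      summable_on_reindex_bij_betw[OF right, of "\<lambda>m. F (x m - x (k + j))"]
      infsum_reindex_bij_betw[OF left, of "\<lambda>m. F (x (k + j) - x m)"]
      infsum_reindex_bij_betw[OF right, of "\<lambda>m. F (x m - x (k + j))"]
    by simp
qed

lemma equilibrium_difference_max_imp_const:
  fixes F :: "real \<Rightarrow> real" and x y :: "int \<Rightarrow> real"
  assumes F: "force_law F" and mono: "strict_mono x" "strict_mono y"
    and eq: "in_equilibrium F x k" "in_equilibrium F y k"
    and max: "\<And>m. y m - x m \<le> y k - x k"
  shows "y m - x m = y k - x k"
proof -
  define Lx where "Lx m = F (x k - x m)" for m
  define Ly where "Ly m = F (y k - y m)" for m
  define Rx where "Rx m = F (x m - x k)" for m
  define Ry where "Ry m = F (y m - y k)" for m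
  have dist_pos: "0 < z a - z b" if "strict_mono z" "b < a" for z :: "int \<Rightarrow> real" and a b
    using that by (simp add: strict_mono_less)
  have sum: "Lx summable_on {..<k}" "Rx summable_on {k<..}" "infsum Lx {..<k} = infsum Rx {k<..}"
    "Ly summable_on {..<k}" "Ry summable_on {k<..}" "infsum Ly {..<k} = infsum Ry {k<..}"
    using eq unfolding in_equilibrium_def Lx_def Rx_def Ly_def Ry_def by auto
  have L: "Ly a \<le> Lx a" if "a \<in> {..<k}" for a
    unfolding Lx_def Ly_def using that max[of a] dist_pos[OF mono(1)]
    by (intro force_law_antimono[OF F]) auto
  have R: "Rx a \<le> Ry a" if "a \<in> {k<..}" for a
    unfolding Rx_def Ry_def using that max[of a] dist_pos[OF mono(2)]
    by (intro force_law_antimono[OF F]) auto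
  have "infsum Ly {..<k} \<le> infsum Lx {..<k}" "infsum Rx {k<..} \<le> infsum Ry {k<..}"
    by (rule infsum_mono[OF sum(4,1) L], assumption) (rule infsum_mono[OF sum(2,5) R])
  then have sums_eq: "infsum Lx {..<k} \<le> infsum Ly {..<k}" "infsum Ry {k<..} \<le> infsum Rx {k<..}"
    using sum by linarith+
  consider "m < k" | "m = k" | "k < m" by linarith
  then show ?thesis
  proof cases
    case 1
    then have "F (y k - y m) = F (x k - x m)"
      using infsum_mono_eq_imp_eq[OF sum(4,1) L sums_eq(1)] by (simp add: Lx_def Ly_def)
    then have "y k - y m = x k - x m"
      using force_law_inj[OF F dist_pos[OF mono(2) 1] dist_pos[OF mono(1) 1]] by simp
    then show ?thesis by simp
  next
    case 3
    then have "F (x m - x k) = F (y m - y k)"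
      using infsum_mono_eq_imp_eq[OF sum(2,5) R sums_eq(2)] by (simp add: Rx_def Ry_def)
    then have "x m - x k = y m - y k"
      using force_law_inj[OF F dist_pos[OF mono(1) 3] dist_pos[OF mono(2) 3]] by simp
    then show ?thesis by simp
  qed simp
qed

theorem mainTheorem1:
  fixes F :: "real \<Rightarrow> real" and x :: "int \<Rightarrow> real"
  assumes "force_law F"
    and "equilibrium_configuration F x"
    and "(\<exists>k. \<forall>m. x (k + 1) - x k \<ge> x (m + 1) - x m) \<or>
         (\<exists>k. \<forall>m. x (k + 1) - x k \<le> x (m + 1) - x m)"
  shows "trivial_configuration x"
proof -
  define y where "y = (\<lambda>m. x (m + 1))"
  have mono: "strict_mono x" "strict_mono y"
    using assms(2) unfolding equilibrium_configuration_def configuration_def y_def strict_mono_def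
    by simp_all
  have eq: "in_equilibrium F x k" "in_equilibrium F y k" for k
    using assms(2) in_equilibrium_shift[of F x 1 k]
    unfolding equilibrium_configuration_def y_def by simp_all
  have "\<exists>k. \<forall>m. y m - x m = y k - x k"
    using assms(3)
  proof (elim disjE exE)
    fix k assume "\<forall>m. x (k + 1) - x k \<ge> x (m + 1) - x m"
    then have "y m - x m \<le> y k - x k" for m
      by (simp add: y_def)
    then show ?thesis
      using equilibrium_difference_max_imp_const[OF assms(1) mono eq] by blast
  next
    fix k assume "\<forall>m. x (k + 1) - x k \<le> x (m + 1) - x m"
    then have "x m - y m \<le> x k - y k" for m
      unfolding y_def by (smt (verit))
    then have "x m - y m = x k - y k" for m
      by (rule equilibrium_difference_max_imp_const[OF assms(1) mono(2,1) eq(2,1)])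
    then show ?thesis
      by (metis minus_diff_eq)
  qed
  then show ?thesis
    unfolding trivial_configuration_def y_def by blast
qed

end
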